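(* Let $n\ge 2$. Among all simple directed graphs with $n$ vertices and $n-1$ arcs, the maximal algebraic connectivity is $1$, and a simple directed graph with $n$ vertices and $n-1$ arcs has algebraic connectivity $1$ if and only if it is a directed tree.
   Context: A simple directed graph has no self-arcs and no repeated arcs; an arc $(j,i)$ goes from $j$ to $i$. The (in-degree) Laplacian of a directed graph $\mathbb G$ on vertices $\{1,\dots,n\}$ is $L(\mathbb G)=D-A$, where $D$ is the diagonal matrix of in-degrees and $A_{ij}=1$ if $(j,i)$ is an arc and $0$ otherwise. Its eigenvalues, counted with algebraic multiplicity, have real parts $0={\rm Re}(\lambda_1)\le {\rm Re}(\lambda_2)\le\cdots\le{\rm Re}(\lambda_n)$; the algebraic connectivity is $a(\mathbb G)={\rm Re}(\lambda_2)$, the second smallest real part. A vertex $r$ is a root if there is a directed path from $r$ to every other vertex; a graph is rooted if it has a root. An $n$-vertex directed tree is a rooted directed graph with $n$ vertices and $n-1$ arcs. *)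

theory Defs
  imports "Jordan_Normal_Form.Char_Poly" "HOL-Computational_Algebra.Polynomial" "HOL-Library.Multiset"
begin

text \<open>Vertices are 0..n-1 (a relabelling of 1..n). A directed graph is given by its arc set
  A of pairs (j,i), meaning an arc from j to i. Being a set, A has no repeated arcs.\<close>

definition simple_digraph :: "nat \<Rightarrow> (nat \<times> nat) set \<Rightarrow> bool" where
  "simple_digraph n A \<longleftrightarrow> A \<subseteq> {0..<n} \<times> {0..<n} \<and> (\<forall>v. (v, v) \<notin> A)"

definition in_degree :: "(nat \<times> nat) set \<Rightarrow> nat \<Rightarrow> nat" where
  "in_degree A i = card {j. (j, i) \<in> A}"

definition laplacian :: "nat \<Rightarrow> (nat \<times> nat) set \<Rightarrow> complex mat" where
  "laplacian n A = mat n n (\<lambda>(i, j).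
      (if i = j then of_nat (in_degree A i) else 0) - (if (j, i) \<in> A then 1 else 0))"

definition lap_eigenvalues :: "nat \<Rightarrow> (nat \<times> nat) set \<Rightarrow> complex multiset" where
  "lap_eigenvalues n A = proots (char_poly (laplacian n A))"

definition alg_conn :: "nat \<Rightarrow> (nat \<times> nat) set \<Rightarrow> real" where
  "alg_conn n A = sorted_list_of_multiset (image_mset Re (lap_eigenvalues n A)) ! 1"

definition is_root :: "nat \<Rightarrow> (nat \<times> nat) set \<Rightarrow> nat \<Rightarrow> bool" where
  "is_root n A r \<longleftrightarrow> r < n \<and> (\<forall>v < n. (r, v) \<in> A\<^sup>*)"

definition rooted :: "nat \<Rightarrow> (nat \<times> nat) set \<Rightarrow> bool" where
  "rooted n A \<longleftrightarrow> (\<exists>r. is_root n A r)"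

definition directed_tree :: "nat \<Rightarrow> (nat \<times> nat) set \<Rightarrow> bool" where
  "directed_tree n A \<longleftrightarrow> simple_digraph n A \<and> rooted n A \<and> card A = n - 1"

end

theory Submission
  imports Defs "Jordan_Normal_Form.Schur_Decomposition"
begin

(*
  The Laplacian has zero row sums, and by Gershgorin's argument all its eigenvalues have
  nonnegative real part; they sum to the trace, which is the number n - 1 of arcs. So the
  n real parts are nonnegative with sum n - 1, and the second smallest is at most 1.

  In a directed tree the root has in-degree 0 and every other vertex in-degree 1, which
  forces every eigenvalue to be 0 or 1; the real parts are then one 0 and n - 1 ones.

  A graph that is not rooted has two disjoint nonempty vertex sets that no arc enters from
  outside. After permuting the vertices each of them gives a diagonal block of the Laplacian
  that splits off the characteristic polynomial and has zero row sums, so 0 is an eigenvalue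
  of multiplicity at least 2 and the algebraic connectivity is 0.
*)

lemma trace_mult_comm:
  fixes X Y :: "'a::comm_ring_1 mat"
  assumes X: "X \<in> carrier_mat n k" and Y: "Y \<in> carrier_mat k n"
  shows "(\<Sum>i<n. (X * Y) $$ (i,i)) = (\<Sum>j<k. (Y * X) $$ (j,j))"
proof -
  have "(\<Sum>i<n. (X * Y) $$ (i,i)) = (\<Sum>i<n. \<Sum>j<k. X $$ (i,j) * Y $$ (j,i))"
    using X Y by (auto simp: scalar_prod_def intro!: sum.cong atLeast0LessThan)
  also have "\<dots> = (\<Sum>j<k. \<Sum>i<n. Y $$ (j,i) * X $$ (i,j))"
    by (subst sum.swap) (simp add: mult.commute)
  also have "\<dots> = (\<Sum>j<k. (Y * X) $$ (j,j))"
    using X Y by (auto simp: scalar_prod_def intro!: sum.cong atLeast0LessThan)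
  finally show ?thesis .
qed

lemma char_poly_linear_factors_trace:
  fixes A :: "complex mat"
  assumes A: "A \<in> carrier_mat n n"
  obtains es where "char_poly A = (\<Prod>e\<leftarrow>es. [:- e, 1:])" "length es = n"
    "sum_list es = (\<Sum>i<n. A $$ (i,i))"
proof -
  obtain es where es: "char_poly A = (\<Prod>e\<leftarrow>es. [:- e, 1:])" "length es = n"
    using char_poly_factorized[OF A] by blast
  obtain B P Q where sd: "schur_decomposition A es = (B,P,Q)"
    by (cases "schur_decomposition A es") auto
  from schur_decomposition[OF A es(1) sd]
  have sim: "similar_mat_wit A B P Q" and diag: "diag_mat B = es" by auto
  from sim A have P: "P \<in> carrier_mat n n" and B: "B \<in> carrier_mat n n"
    and Q: "Q \<in> carrier_mat n n" and QP: "Q * P = 1\<^sub>m n" and AE: "A = P * B * Q"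
    unfolding similar_mat_wit_def Let_def by auto
  have "(\<Sum>i<n. A $$ (i,i)) = (\<Sum>i<n. (P * (B * Q)) $$ (i,i))"
    using AE P B Q by (simp add: assoc_mult_mat)
  also have "\<dots> = (\<Sum>i<n. ((B * Q) * P) $$ (i,i))"
    using P B Q by (intro trace_mult_comm) auto
  also have "(B * Q) * P = B"
    using B Q P QP by (simp add: assoc_mult_mat)
  also have "(\<Sum>i<n. B $$ (i,i)) = sum_list es"
    using B by (simp add: diag[symmetric] diag_mat_def sum_list_sum_nth atLeast0LessThan)
  finally show ?thesis using that es by simp
qed

lemma proots_linear_factors: "proots (\<Prod>e\<leftarrow>es. [:- e, 1:]) = mset (es :: 'a::idom list)"
proof -
  have "proots (\<Prod>p\<leftarrow>map (\<lambda>e. [:- e, 1:]) es. p) = (\<Sum>p\<leftarrow>map (\<lambda>e. [:- e, 1:]) es. proots p)"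
    by (rule proots_prod_list) auto
  then show ?thesis
    by (simp add: comp_def)
qed

definition principal_submat :: "nat \<Rightarrow> (nat \<Rightarrow> nat) \<Rightarrow> 'a mat \<Rightarrow> 'a mat" where
  "principal_submat k f M = mat k k (\<lambda>(i,j). M $$ (f i, f j))"

lemma principal_submat_dim [simp]:
  "dim_row (principal_submat k f M) = k" "dim_col (principal_submat k f M) = k"
  by (simp_all add: principal_submat_def)

lemma principal_submat_carrier [simp]: "principal_submat k f M \<in> carrier_mat k k"
  by (simp add: principal_submat_def)

lemma principal_submat_index [simp]:
  "i < k \<Longrightarrow> j < k \<Longrightarrow> principal_submat k f M $$ (i,j) = M $$ (f i, f j)"
  by (simp add: principal_submat_def)

lemma principal_submat_principal_submat:
  assumes "\<And>i. i < l \<Longrightarrow> g i < k"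
  shows "principal_submat l g (principal_submat k f M) = principal_submat l (f \<circ> g) M"
  using assms by (intro eq_matI) (auto simp: principal_submat_def)

lemma det_principal_submat_permutes:
  fixes B :: "'a::comm_ring_1 mat"
  assumes B: "B \<in> carrier_mat n n" and p: "p permutes {0..<n}"
  shows "det (principal_submat n p B) = det B"
proof -
  have pn: "\<And>i. i < n \<Longrightarrow> p i < n"
    using p by (meson atLeastLessThan_iff permutes_in_image zero_le)
  define C where "C = mat n n (\<lambda>(i,j). B $$ (p i, j))"
  define D where "D = mat n n (\<lambda>(i,j). transpose_mat C $$ (p i, j))"
  have C: "C \<in> carrier_mat n n" and D: "D \<in> carrier_mat n n"
    by (simp_all add: C_def D_def)
  have "principal_submat n p B = transpose_mat D"
    by (rule eq_matI) (auto simp: D_def C_def pn)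
  then have "det (principal_submat n p B) = det D"
    by (simp add: det_transpose[OF D])
  also have "\<dots> = signof p * signof p * det B"
    using det_permute_rows[OF B p] det_permute_rows[of "transpose_mat C" n p] C p
    by (simp add: D_def C_def[symmetric] det_transpose[OF C] mult.assoc)
  also have "signof p * signof p = (1::'a)"
    by (simp add: sign_def)
  finally show ?thesis by simp
qed

lemma char_poly_principal_submat_permutes:
  fixes M :: "'a::comm_ring_1 mat"
  assumes M: "M \<in> carrier_mat n n" and p: "p permutes {0..<n}"
  shows "char_poly (principal_submat n p M) = char_poly M"
proof -
  have pn: "\<And>i. i < n \<Longrightarrow> p i < n"
    using p by (meson atLeastLessThan_iff permutes_in_image zero_le)
  have pinj: "\<And>i j. p i = p j \<longleftrightarrow> i = j"
    using p by (metis permutes_inj injD)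
  have "char_poly_matrix (principal_submat n p M) = principal_submat n p (char_poly_matrix M)"
    by (rule eq_matI) (use M pn pinj in \<open>auto simp: char_poly_matrix_def\<close>)
  then show ?thesis
    unfolding char_poly_def
    using det_principal_submat_permutes[OF _ p, of "char_poly_matrix M"] M by simp
qed

lemma char_poly_block_lower_triangular:
  fixes M :: "'a::idom mat"
  assumes M: "M \<in> carrier_mat n n" and m: "m \<le> n"
    and zero: "\<And>i j. i < m \<Longrightarrow> m \<le> j \<Longrightarrow> j < n \<Longrightarrow> M $$ (i,j) = 0"
  shows "char_poly M = char_poly (principal_submat m id M) *
     char_poly (principal_submat (n - m) ((+) m) M)"
proof -
  let ?M1 = "principal_submat m id M"
  let ?M4 = "principal_submat (n - m) ((+) m) M"
  let ?C = "mat (n - m) m (\<lambda>(i,j). [:- M $$ (m + i, j):])"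
  have "char_poly_matrix M =
      four_block_mat (char_poly_matrix ?M1) (0\<^sub>m m (n - m)) ?C (char_poly_matrix ?M4)"
    by (rule eq_matI) (use M m zero in \<open>auto simp: char_poly_matrix_def\<close>)
  then have "char_poly M =
      det (four_block_mat (char_poly_matrix ?M1) (0\<^sub>m m (n - m)) ?C (char_poly_matrix ?M4))"
    unfolding char_poly_def by simp
  also have "\<dots> = char_poly ?M1 * char_poly ?M4"
    unfolding char_poly_def by (rule det_four_block_mat_upper_right_zero) auto
  finally show ?thesis .
qed

lemma permutes_prefix_onto:
  assumes S: "S \<subseteq> {0..<n}"
  obtains p where "p permutes {0..<n}" "bij_betw p {0..<card S} S"
    "bij_betw p {card S..<n} ({0..<n} - S)"
proof -
  define m where "m = card S"
  define T where "T = {0..<n} - S"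
  have fS: "finite S" using S finite_subset by blast
  have mn: "m \<le> n" unfolding m_def using card_mono[OF _ S] by simp
  have cT: "card T = n - m" unfolding T_def m_def using S by (simp add: card_Diff_subset fS)
  obtain f where f: "bij_betw f {0..<m} S" using ex_bij_betw_nat_finite[OF fS] m_def by blast
  obtain g where g: "bij_betw g {0..<n-m} T"
    using ex_bij_betw_nat_finite[of T] cT unfolding T_def by auto
  define p where "p i = (if i < m then f i else if i < n then g (i - m) else i)" for i
  have b1: "bij_betw p {0..<m} S"
    using f by (rule bij_betw_cong[THEN iffD1, rotated]) (simp add: p_def)
  have shift: "bij_betw (\<lambda>i. i - m) {m..<n} {0..<n-m}"
    by (rule bij_betw_byWitness[where f'="\<lambda>i. i + m"]) auto
  have b2: "bij_betw p {m..<n} T"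
    using bij_betw_trans[OF shift g] by (rule bij_betw_cong[THEN iffD1, rotated]) (simp add: p_def)
  have "bij_betw p ({0..<m} \<union> {m..<n}) (S \<union> T)"
    by (rule bij_betw_combine[OF b1 b2]) (auto simp: T_def)
  moreover have "{0..<m} \<union> {m..<n} = {0..<n}" "S \<union> T = {0..<n}"
    using mn S by (auto simp: T_def)
  ultimately have "p permutes {0..<n}"
    by (intro bij_imp_permutes) (auto simp: p_def)
  with that b1 b2 show ?thesis unfolding m_def T_def by blast
qed

lemma char_poly_split_invariant_block:
  fixes M :: "'a::idom mat"
  assumes M: "M \<in> carrier_mat n n" and S: "S \<subseteq> {0..<n}"
    and zero: "\<And>i j. i \<in> S \<Longrightarrow> j < n \<Longrightarrow> j \<notin> S \<Longrightarrow> M $$ (i,j) = 0"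
  obtains f g where "bij_betw f {0..<card S} S" "bij_betw g {0..<n - card S} ({0..<n} - S)"
    "char_poly M = char_poly (principal_submat (card S) f M) *
       char_poly (principal_submat (n - card S) g M)"
proof -
  define m where "m = card S"
  obtain p where p: "p permutes {0..<n}" "bij_betw p {0..<m} S" "bij_betw p {m..<n} ({0..<n} - S)"
    using permutes_prefix_onto[OF S] unfolding m_def by blast
  have mn: "m \<le> n" unfolding m_def using card_mono[OF _ S] by simp
  have "char_poly M = char_poly (principal_submat n p M)"
    by (rule char_poly_principal_submat_permutes[symmetric, OF M p(1)])
  also have "\<dots> = char_poly (principal_submat m id (principal_submat n p M)) *
      char_poly (principal_submat (n - m) ((+) m) (principal_submat n p M))"
  proof (rule char_poly_block_lower_triangular[OF _ mn])
    fix i j assume "i < m" "m \<le> j" "j < n"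
    then have "p i \<in> S" "p j \<in> {0..<n} - S"
      using bij_betw_apply[OF p(2)] bij_betw_apply[OF p(3)] by simp_all
    with \<open>i < m\<close> \<open>j < n\<close> mn show "principal_submat n p M $$ (i, j) = 0"
      by (simp add: zero)
  qed simp
  also have "\<dots> = char_poly (principal_submat m p M) *
      char_poly (principal_submat (n - m) (p \<circ> (+) m) M)"
    using mn by (simp add: principal_submat_principal_submat)
  finally have "char_poly M = \<dots>" .
  moreover have "bij_betw (p \<circ> (+) m) {0..<n - m} ({0..<n} - S)"
  proof (rule bij_betw_trans[OF _ p(3)])
    show "bij_betw ((+) m) {0..<n - m} {m..<n}"
      by (rule bij_betw_byWitness[where f'="\<lambda>i. i - m"]) (use mn in auto)
  qed
  ultimately show ?thesis using that p(2) unfolding m_def by blast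
qed

lemma count_le_count_image_mset: "count M x \<le> count (image_mset f M) (f x)"
  by (induction M) auto

lemma sum_mset_image_Re: "sum_mset (image_mset Re M) = Re (sum_mset M)"
  by (induction M) auto

lemma sorted_list_of_multiset_Cons_Cons:
  fixes X :: "'a::linorder multiset"
  assumes "size X \<ge> 2"
  obtains a b rest where "sorted_list_of_multiset X = a # b # rest"
    "X = add_mset a (add_mset b (mset rest))" "a \<le> b" "\<forall>x\<in>set rest. b \<le> x"
proof -
  let ?ys = "sorted_list_of_multiset X"
  have "length ?ys \<ge> 2"
    using assms by (metis size_mset mset_sorted_list_of_multiset)
  then obtain a b rest where ys: "?ys = a # b # rest"
    by (metis One_nat_def Suc_1 Suc_le_length_iff le_SucE numeral_2_eq_2)
  have "sorted (a # b # rest)"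
    using ys sorted_sorted_list_of_multiset by metis
  moreover have "X = add_mset a (add_mset b (mset rest))"
    using ys mset_sorted_list_of_multiset[of X] by simp
  ultimately show ?thesis
    using that ys by simp
qed

lemma second_smallest_le_mean:
  fixes X :: "real multiset"
  assumes size: "size X \<ge> 2" and nonneg: "\<forall>x\<in>#X. 0 \<le> x"
  shows "(real (size X) - 1) * sorted_list_of_multiset X ! 1 \<le> sum_mset X"
proof -
  obtain a b rest where ys: "sorted_list_of_multiset X = a # b # rest"
    and X: "X = add_mset a (add_mset b (mset rest))" and "a \<le> b" and b: "\<forall>x\<in>set rest. b \<le> x"
    by (rule sorted_list_of_multiset_Cons_Cons[OF size])
  have "real (length rest) * b \<le> sum_list rest"
    using sum_list_mono[of rest "\<lambda>_. b" id] b by (simp add: sum_list_triv)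
  moreover have "0 \<le> a" using nonneg X by simp
  moreover have "sum_mset X = a + b + sum_list rest" "size X = length rest + 2"
    using X by (simp_all add: sum_mset_sum_list)
  ultimately show ?thesis
    unfolding ys by (simp add: algebra_simps)
qed

lemma second_smallest_eq_0:
  fixes X :: "real multiset"
  assumes nonneg: "\<forall>x\<in>#X. 0 \<le> x" and zeros: "count X 0 \<ge> 2"
  shows "sorted_list_of_multiset X ! 1 = 0"
proof -
  have size: "size X \<ge> 2" using zeros count_le_size[of X 0] by linarith
  obtain a b rest where ys: "sorted_list_of_multiset X = a # b # rest"
    and X: "X = add_mset a (add_mset b (mset rest))" and "a \<le> b" and b: "\<forall>x\<in>set rest. b \<le> x"
    by (rule sorted_list_of_multiset_Cons_Cons[OF size])
  have "0 \<le> a" using nonneg X by simp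
  show ?thesis
  proof (rule ccontr)
    assume "sorted_list_of_multiset X ! 1 \<noteq> 0"
    then have "b > 0" using ys \<open>0 \<le> a\<close> \<open>a \<le> b\<close> by simp
    then have "count (mset rest) 0 = 0"
      using b by force
    then have "count X 0 \<le> 1"
      using X \<open>b > 0\<close> by (simp del: count_mset_0_iff)
    then show False using zeros by simp
  qed
qed

lemma second_smallest_eq_1:
  fixes X :: "real multiset"
  assumes size: "size X \<ge> 2" and bool: "set_mset X \<subseteq> {0, 1}"
    and sum: "sum_mset X = real (size X) - 1"
  shows "sorted_list_of_multiset X ! 1 = 1"
proof -
  obtain a b rest where ys: "sorted_list_of_multiset X = a # b # rest"
    and X: "X = add_mset a (add_mset b (mset rest))" and "a \<le> b" and "\<forall>x\<in>set rest. b \<le> x"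
    by (rule sorted_list_of_multiset_Cons_Cons[OF size])
  have ab: "a \<in> {0, 1}" "b \<in> {0, 1}" and "set rest \<subseteq> {0, 1}"
    using bool X by auto
  then have "sum_list rest \<le> real (length rest)"
    using sum_list_mono[of rest id "\<lambda>_. 1"] by (force simp: sum_list_triv)
  moreover have "sum_mset X = a + b + sum_list rest" "size X = length rest + 2"
    using X by (simp_all add: sum_mset_sum_list)
  ultimately have "b \<noteq> 0"
    using sum ab \<open>a \<le> b\<close> by auto
  then show ?thesis
    using ys ab by auto
qed

lemma laplacian_dim [simp]: "dim_row (laplacian n A) = n" "dim_col (laplacian n A) = n"
  by (simp_all add: laplacian_def)

lemma laplacian_carrier [simp]: "laplacian n A \<in> carrier_mat n n"
  by (simp add: laplacian_def)

lemma laplacian_index: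
  "i < n \<Longrightarrow> j < n \<Longrightarrow> laplacian n A $$ (i,j) =
     (if i = j then of_nat (in_degree A i) else 0) - (if (j, i) \<in> A then 1 else 0)"
  by (simp add: laplacian_def)

lemma in_arcs_subset: "simple_digraph n A \<Longrightarrow> {j. (j,i) \<in> A} \<subseteq> {0..<n}"
  by (auto simp: simple_digraph_def)

lemma finite_in_arcs: "simple_digraph n A \<Longrightarrow> finite {j. (j,i) \<in> A}"
  by (rule finite_subset[OF in_arcs_subset]) auto

lemma sum_in_degree:
  assumes s: "simple_digraph n A"
  shows "(\<Sum>i<n. in_degree A i) = card A"
proof -
  have "A = (\<lambda>(i,j). (j,i)) ` (SIGMA i:{..<n}. {j. (j,i) \<in> A})"
    using s by (force simp: simple_digraph_def)
  moreover have "inj_on (\<lambda>(i,j). (j,i)) (SIGMA i:{..<n}. {j. (j,i) \<in> A})"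
    by (auto simp: inj_on_def)
  ultimately have "card A = card (SIGMA i:{..<n}. {j. (j,i) \<in> A})"
    by (metis card_image)
  also have "\<dots> = (\<Sum>i<n. card {j. (j,i) \<in> A})"
    using finite_in_arcs[OF s] by (simp add: card_SigmaI)
  finally show ?thesis by (simp add: in_degree_def)
qed

lemma trace_laplacian:
  assumes s: "simple_digraph n A"
  shows "(\<Sum>i<n. laplacian n A $$ (i,i)) = of_nat (card A)"
proof -
  have "(\<Sum>i<n. laplacian n A $$ (i,i)) = (\<Sum>i<n. of_nat (in_degree A i))"
    using s by (intro sum.cong refl) (auto simp: laplacian_index simple_digraph_def)
  also have "\<dots> = of_nat (card A)"
    using sum_in_degree[OF s] by (metis of_nat_sum)
  finally show ?thesis .
qed

lemma laplacian_mult_vec_index: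
  assumes s: "simple_digraph n A" and i: "i < n" and v: "v \<in> carrier_vec n"
  shows "(laplacian n A *\<^sub>v v) $ i = of_nat (in_degree A i) * v $ i - (\<Sum>j | (j,i) \<in> A. v $ j)"
proof -
  have "(laplacian n A *\<^sub>v v) $ i = (\<Sum>j\<in>{0..<n}. laplacian n A $$ (i,j) * v $ j)"
    using i v by (simp add: scalar_prod_def)
  also have "\<dots> = (\<Sum>j\<in>{0..<n}. (if i = j then of_nat (in_degree A i) * v $ j else 0)
      - (if (j, i) \<in> A then v $ j else 0))"
    using i by (intro sum.cong refl) (simp add: laplacian_index left_diff_distrib)
  also have "\<dots> = of_nat (in_degree A i) * v $ i - (\<Sum>j\<in>{0..<n}. if (j, i) \<in> A then v $ j else 0)"
    using i by (simp add: sum_subtractf)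
  also have "(\<Sum>j\<in>{0..<n}. if (j, i) \<in> A then v $ j else 0) = (\<Sum>j | (j,i) \<in> A. v $ j)"
  proof -
    have "{j \<in> {0..<n}. (j,i) \<in> A} = {j. (j,i) \<in> A}"
      using in_arcs_subset[OF s, of i] by auto
    then show ?thesis by (simp add: sum.inter_filter[symmetric])
  qed
  finally show ?thesis .
qed

lemma laplacian_row_sum:
  assumes s: "simple_digraph n A" and i: "i < n"
  shows "(\<Sum>j<n. laplacian n A $$ (i,j)) = 0"
proof -
  let ?one = "vec n (\<lambda>_. 1) :: complex vec"
  have "(\<Sum>j | (j,i) \<in> A. ?one $ j) = (\<Sum>j | (j,i) \<in> A. 1)"
    using in_arcs_subset[OF s, of i] by (intro sum.cong) auto
  then have "(\<Sum>j | (j,i) \<in> A. ?one $ j) = of_nat (in_degree A i)"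
    by (simp add: in_degree_def)
  moreover have "(\<Sum>j<n. laplacian n A $$ (i,j)) = (laplacian n A *\<^sub>v ?one) $ i"
    using i by (simp add: scalar_prod_def atLeast0LessThan)
  ultimately show ?thesis
    using laplacian_mult_vec_index[OF s i, of ?one] i by simp
qed

lemma laplacian_eigenvector:
  assumes s: "simple_digraph n A" and e: "e \<in># lap_eigenvalues n A"
  obtains v where "v \<in> carrier_vec n" "v \<noteq> 0\<^sub>v n"
    "\<And>i. i < n \<Longrightarrow> e * v $ i = of_nat (in_degree A i) * v $ i - (\<Sum>j | (j,i) \<in> A. v $ j)"
proof -
  have "char_poly (laplacian n A) \<noteq> 0"
    using degree_monic_char_poly[OF laplacian_carrier, of n A] by auto
  with e have "eigenvalue (laplacian n A) e"
    by (simp add: lap_eigenvalues_def eigenvalue_root_char_poly[OF laplacian_carrier])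
  then obtain v where v: "v \<in> carrier_vec n" "v \<noteq> 0\<^sub>v n" "laplacian n A *\<^sub>v v = e \<cdot>\<^sub>v v"
    unfolding eigenvalue_def eigenvector_def by auto
  have "e * v $ i = of_nat (in_degree A i) * v $ i - (\<Sum>j | (j,i) \<in> A. v $ j)" if "i < n" for i
    using arg_cong[OF v(3), of "\<lambda>w. w $ i"] laplacian_mult_vec_index[OF s that v(1)] that v(1)
    by simp
  with that v(1,2) show ?thesis by blast
qed

text \<open>Gershgorin: at a coordinate \<open>i\<close> of maximal modulus, \<open>\<bar>d\<^sub>i - e\<bar> \<le> d\<^sub>i\<close>.\<close>

lemma lap_eigenvalue_Re_nonneg:
  assumes s: "simple_digraph n A" and e: "e \<in># lap_eigenvalues n A"
  shows "Re e \<ge> 0"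
proof -
  obtain v where v: "v \<in> carrier_vec n" "v \<noteq> 0\<^sub>v n"
    and row: "\<And>i. i < n \<Longrightarrow> e * v $ i = of_nat (in_degree A i) * v $ i - (\<Sum>j | (j,i) \<in> A. v $ j)"
    using laplacian_eigenvector[OF s e] by blast
  define m where "m = Max ((\<lambda>j. cmod (v $ j)) ` {..<n})"
  have "\<exists>j<n. v $ j \<noteq> 0"
    using v by (metis carrier_vecD eq_vecI index_zero_vec)
  then have "n > 0" by auto
  then have "m \<in> (\<lambda>j. cmod (v $ j)) ` {..<n}"
    unfolding m_def by (intro Max_in) auto
  then obtain i where i: "i < n" "cmod (v $ i) = m" by auto
  have max: "cmod (v $ j) \<le> m" if "j < n" for j
    using that unfolding m_def by (intro Max_ge) auto
  have "v $ i \<noteq> 0"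
    using max i \<open>\<exists>j<n. v $ j \<noteq> 0\<close> by force
  let ?d = "of_nat (in_degree A i) :: complex"
  have "(?d - e) * v $ i = (\<Sum>j | (j,i) \<in> A. v $ j)"
    using row[OF i(1)] by (simp add: algebra_simps)
  then have "cmod (?d - e) * m = cmod (\<Sum>j | (j,i) \<in> A. v $ j)"
    using i(2) by (metis norm_mult)
  also have "\<dots> \<le> (\<Sum>j | (j,i) \<in> A. m)"
    using in_arcs_subset[OF s, of i] max by (intro order.trans[OF norm_sum sum_mono]) auto
  also have "\<dots> = real (in_degree A i) * m" by (simp add: in_degree_def)
  finally have "cmod (?d - e) * m \<le> real (in_degree A i) * m" .
  moreover have "m > 0"
    using i(2) \<open>v $ i \<noteq> 0\<close> by auto
  ultimately have "cmod (?d - e) \<le> real (in_degree A i)"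
    by (rule mult_right_le_imp_le)
  then show ?thesis
    using complex_Re_le_cmod[of "?d - e"] by simp
qed

lemma lap_eigenvalues_size_sum:
  assumes s: "simple_digraph n A"
  shows "size (lap_eigenvalues n A) = n" "sum_mset (lap_eigenvalues n A) = of_nat (card A)"
proof -
  obtain es where es: "char_poly (laplacian n A) = (\<Prod>e\<leftarrow>es. [:- e, 1:])" "length es = n"
    "sum_list es = (\<Sum>i<n. laplacian n A $$ (i,i))"
    using char_poly_linear_factors_trace[OF laplacian_carrier] by blast
  have "lap_eigenvalues n A = mset es"
    by (simp add: lap_eigenvalues_def es(1) proots_linear_factors)
  then show "size (lap_eigenvalues n A) = n" "sum_mset (lap_eigenvalues n A) = of_nat (card A)"
    using es(2,3) trace_laplacian[OF s] by (simp_all add: sum_mset_sum_list)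
qed

lemma alg_conn_le_1:
  assumes n: "n \<ge> 2" and s: "simple_digraph n A" and c: "card A = n - 1"
  shows "alg_conn n A \<le> 1"
proof -
  let ?X = "image_mset Re (lap_eigenvalues n A)"
  have size: "size ?X = n" and sum: "sum_mset ?X = real n - 1"
    using lap_eigenvalues_size_sum[OF s] c n by (simp_all add: sum_mset_image_Re of_nat_diff)
  have "\<forall>x\<in>#?X. 0 \<le> x"
    using lap_eigenvalue_Re_nonneg[OF s] by auto
  then have "(real n - 1) * alg_conn n A \<le> real n - 1"
    using second_smallest_le_mean[of ?X] size sum n by (simp add: alg_conn_def)
  then show ?thesis
    using n by simp
qed

lemma tree_in_degree:
  assumes s: "simple_digraph n A" and r: "is_root n A r" and c: "card A = n - 1"
  shows "in_degree A r = 0" "\<And>v. v < n \<Longrightarrow> v \<noteq> r \<Longrightarrow> in_degree A v = 1"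
proof -
  have rn: "r < n" using r by (simp add: is_root_def)
  have ge1: "in_degree A v \<ge> 1" if v: "v < n" "v \<noteq> r" for v
  proof -
    have "(r,v) \<in> A\<^sup>*" using r v by (simp add: is_root_def)
    then obtain u where "(u,v) \<in> A" using v(2) by (auto elim: rtranclE)
    then show ?thesis
      using finite_in_arcs[OF s, of v] by (auto simp: in_degree_def Suc_le_eq card_gt_0_iff)
  qed
  let ?R = "{..<n} - {r}"
  have total: "in_degree A r + (\<Sum>v\<in>?R. in_degree A v) = n - 1"
    using sum_in_degree[OF s] c rn by (simp add: sum.remove[of "{..<n}" r])
  have "n - 1 \<le> (\<Sum>v\<in>?R. in_degree A v)"
    using sum_mono[of ?R "\<lambda>_. 1" "in_degree A"] ge1 rn by simp
  with total show "in_degree A r = 0" by linarith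
  fix v assume v: "v < n" "v \<noteq> r"
  show "in_degree A v = 1"
  proof (rule ccontr)
    assume "in_degree A v \<noteq> 1"
    with ge1[OF v] have "1 < in_degree A v" by simp
    then have "(\<Sum>v\<in>?R. 1) < (\<Sum>v\<in>?R. in_degree A v)"
      using ge1 v by (intro sum_strict_mono_ex1) auto
    then show False using total rn by simp
  qed
qed

text \<open>An eigenvector for an eigenvalue \<open>e \<notin> {0, 1}\<close> vanishes at the root (in-degree 0) and
  propagates its zeros along arcs, since a vertex of in-degree 1 satisfies
  \<open>(1 - e) v\<^sub>z = v\<^sub>y\<close> for its unique in-neighbour \<open>y\<close>.\<close>

lemma directed_tree_lap_eigenvalue:
  assumes s: "simple_digraph n A" and r: "is_root n A r" and c: "card A = n - 1"
    and e: "e \<in># lap_eigenvalues n A"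
  shows "e = 0 \<or> e = 1"
proof (rule ccontr)
  assume e01: "\<not> (e = 0 \<or> e = 1)"
  obtain v where v: "v \<in> carrier_vec n" "v \<noteq> 0\<^sub>v n"
    and row: "\<And>i. i < n \<Longrightarrow> e * v $ i = of_nat (in_degree A i) * v $ i - (\<Sum>j | (j,i) \<in> A. v $ j)"
    using laplacian_eigenvector[OF s e] by blast
  have rn: "r < n" using r by (simp add: is_root_def)
  have "{j. (j,r) \<in> A} = {}"
    using tree_in_degree(1)[OF s r c] finite_in_arcs[OF s, of r] by (simp add: in_degree_def)
  then have "v $ r = 0"
    using row[OF rn] tree_in_degree(1)[OF s r c] e01 by simp
  have "v $ w = 0" if "(r,w) \<in> A\<^sup>*" for w
    using that
  proof (induction rule: rtrancl_induct)
    case base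
    show ?case by fact
  next
    case (step y z)
    have "z < n" using step(2) s by (auto simp: simple_digraph_def)
    show ?case
    proof (cases "z = r")
      case False
      then have "card {j. (j,z) \<in> A} = 1"
        using tree_in_degree(2)[OF s r c \<open>z < n\<close>] by (simp add: in_degree_def)
      with step(2) have "{j. (j,z) \<in> A} = {y}"
        by (metis (mono_tags) card_1_singletonE mem_Collect_eq singletonD)
      then have "(1 - e) * v $ z = 0"
        using row[OF \<open>z < n\<close>] tree_in_degree(2)[OF s r c \<open>z < n\<close> False] step(3)
        by (simp add: algebra_simps)
      then show ?thesis using e01 by simp
    qed (use \<open>v $ r = 0\<close> in simp)
  qed
  then have "v = 0\<^sub>v n"
    using v(1) r by (intro eq_vecI) (auto simp: is_root_def)
  with v(2) show False by simp
qed

lemma alg_conn_directed_tree: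
  assumes n: "n \<ge> 2" and t: "directed_tree n A"
  shows "alg_conn n A = 1"
proof -
  from t obtain r where s: "simple_digraph n A" and c: "card A = n - 1" and r: "is_root n A r"
    unfolding directed_tree_def rooted_def by blast
  let ?X = "image_mset Re (lap_eigenvalues n A)"
  have "size ?X = n" "sum_mset ?X = real n - 1"
    using lap_eigenvalues_size_sum[OF s] c n by (simp_all add: sum_mset_image_Re of_nat_diff)
  moreover have "set_mset ?X \<subseteq> {0, 1}"
    using directed_tree_lap_eigenvalue[OF s r c] by fastforce
  ultimately show ?thesis
    using second_smallest_eq_1[of ?X] n by (simp add: alg_conn_def)
qed

definition path_digraph :: "nat \<Rightarrow> (nat \<times> nat) set" where
  "path_digraph n = {(i, Suc i) | i. Suc i < n}"

lemma directed_tree_path_digraph: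
  assumes "n > 0"
  shows "directed_tree n (path_digraph n)"
proof -
  have "path_digraph n = (\<lambda>i. (i, Suc i)) ` {..<n - 1}"
    by (auto simp: path_digraph_def)
  then have "card (path_digraph n) = n - 1"
    by (simp add: card_image inj_on_def)
  moreover have "(0, v) \<in> (path_digraph n)\<^sup>*" if "v < n" for v
    using that
  proof (induction v)
    case (Suc v)
    then have "(v, Suc v) \<in> path_digraph n" by (simp add: path_digraph_def)
    with Suc show ?case by (auto intro: rtrancl_into_rtrancl)
  qed simp
  ultimately show ?thesis
    using assms
    by (auto simp: directed_tree_def simple_digraph_def path_digraph_def rooted_def is_root_def)
qed

definition in_closed :: "(nat \<times> nat) set \<Rightarrow> nat set \<Rightarrow> bool" where
  "in_closed A S \<longleftrightarrow> (\<forall>(j, i) \<in> A. i \<in> S \<longrightarrow> j \<in> S)"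

text \<open>Take \<open>v\<close> reaching the most vertices. Its ancestors and the vertices it does not
  reach are both closed, and they are disjoint: an ancestor \<open>u\<close> of \<open>v\<close> not reached
  from \<open>v\<close> would reach strictly more vertices than \<open>v\<close>.\<close>

lemma not_rooted_two_in_closed:
  assumes s: "simple_digraph n A" and n: "n > 0" and not_rooted: "\<not> rooted n A"
  obtains S1 S2 where "S1 \<subseteq> {0..<n}" "S2 \<subseteq> {0..<n}" "S1 \<noteq> {}" "S2 \<noteq> {}" "S1 \<inter> S2 = {}"
    "in_closed A S1" "in_closed A S2"
proof -
  define R where "R v = {w. w < n \<and> (v,w) \<in> A\<^sup>*}" for v
  have arcs: "\<And>j i. (j,i) \<in> A \<Longrightarrow> j < n \<and> i < n"
    using s by (auto simp: simple_digraph_def)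
  have "Max ((\<lambda>v. card (R v)) ` {0..<n}) \<in> (\<lambda>v. card (R v)) ` {0..<n}"
    using n by (intro Max_in) auto
  then obtain v where v: "v < n" and "card (R v) = Max ((\<lambda>v. card (R v)) ` {0..<n})"
    by auto
  then have max: "card (R u) \<le> card (R v)" if "u < n" for u
    using that by auto
  define S1 where "S1 = {u. u < n \<and> (u,v) \<in> A\<^sup>*}"
  define S2 where "S2 = {0..<n} - R v"
  obtain w where w: "w < n" "(v,w) \<notin> A\<^sup>*"
    using not_rooted v unfolding rooted_def is_root_def by auto
  have "S1 \<subseteq> {0..<n}" "S2 \<subseteq> {0..<n}"
    unfolding S1_def S2_def by auto
  moreover have "S1 \<noteq> {}" "S2 \<noteq> {}"
    using v w unfolding S1_def S2_def R_def by auto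
  moreover have "S1 \<inter> S2 = {}"
  proof (rule ccontr)
    assume "S1 \<inter> S2 \<noteq> {}"
    then obtain u where u: "u < n" "(u,v) \<in> A\<^sup>*" "(v,u) \<notin> A\<^sup>*"
      unfolding S1_def S2_def R_def by auto
    then have "R v \<subset> R u"
      unfolding R_def by (auto intro: rtrancl_trans)
    then have "card (R v) < card (R u)"
      by (rule psubset_card_mono[rotated]) (simp add: R_def)
    with max[OF u(1)] show False by simp
  qed
  moreover have "in_closed A S1"
    using arcs unfolding in_closed_def S1_def by (auto intro: converse_rtrancl_into_rtrancl)
  moreover have "in_closed A S2"
    using arcs unfolding in_closed_def S2_def R_def by (auto intro: rtrancl_into_rtrancl)
  ultimately show ?thesis
    by (rule that)
qed

lemma laplacian_in_closed_zero:
  assumes "in_closed A S" "i \<in> S" "j \<notin> S" "i < n" "j < n"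
  shows "laplacian n A $$ (i,j) = 0"
  using assms by (auto simp: laplacian_index in_closed_def)

lemma in_closed_block_singular:
  assumes s: "simple_digraph n A" and S: "S \<subseteq> {0..<n}" "S \<noteq> {}" "in_closed A S"
    and f: "bij_betw f {0..<k} S"
  shows "poly (char_poly (principal_submat k f (laplacian n A))) 0 = 0"
proof -
  let ?M = "principal_submat k f (laplacian n A)"
  let ?one = "vec k (\<lambda>_. 1 :: complex)"
  have "k > 0" using f S(2) by (auto simp: bij_betw_def)
  have "?M *\<^sub>v ?one = 0 \<cdot>\<^sub>v ?one"
  proof (rule eq_vecI)
    fix i assume "i < dim_vec (0 \<cdot>\<^sub>v ?one)"
    then have i: "i < k" by simp
    then have "f i \<in> S"
      using bij_betw_apply[OF f] by simp
    then have fi: "f i \<in> S" "f i < n"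
      using S(1) by auto
    have "(?M *\<^sub>v ?one) $ i = (\<Sum>j\<in>{0..<k}. laplacian n A $$ (f i, f j))"
      using i by (simp add: scalar_prod_def)
    also have "\<dots> = (\<Sum>l\<in>S. laplacian n A $$ (f i, l))"
      by (rule sum.reindex_bij_betw[OF f])
    also have "\<dots> = (\<Sum>l<n. laplacian n A $$ (f i, l))"
    proof (rule sum.mono_neutral_left)
      show "\<forall>l\<in>{..<n} - S. laplacian n A $$ (f i, l) = 0"
        using fi by (auto intro: laplacian_in_closed_zero[OF S(3)])
    qed (use S(1) in auto)
    also have "\<dots> = 0"
      by (rule laplacian_row_sum[OF s fi(2)])
    finally show "(?M *\<^sub>v ?one) $ i = (0 \<cdot>\<^sub>v ?one) $ i"
      using i by simp
  qed simp
  moreover have "?one \<noteq> 0\<^sub>v k"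
  proof
    assume "?one = 0\<^sub>v k"
    then have "?one $ 0 = 0\<^sub>v k $ 0" by simp
    with \<open>k > 0\<close> show False by simp
  qed
  ultimately have "eigenvector ?M ?one 0"
    unfolding eigenvector_def by simp
  then have "eigenvalue ?M 0"
    unfolding eigenvalue_def by blast
  then show ?thesis
    using eigenvalue_root_char_poly[of ?M k] by simp
qed

text \<open>The rows indexed by \<open>S\<close> vanish outside \<open>S\<close>, so the block on \<open>S\<close>, which has zero
  row sums, splits off the characteristic polynomial.\<close>

lemma in_closed_principal_submat_singular:
  assumes s: "simple_digraph n A" and S: "S \<noteq> {}" "in_closed A S"
    and g: "bij_betw g {0..<k} B" and B: "B \<subseteq> {0..<n}" "S \<subseteq> B"
  shows "poly (char_poly (principal_submat k g (laplacian n A))) 0 = 0"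
proof -
  let ?M = "principal_submat k g (laplacian n A)"
  define T where "T = {i \<in> {0..<k}. g i \<in> S}"
  have T: "T \<subseteq> {0..<k}" unfolding T_def by auto
  have gn: "g i < n" if "i < k" for i
    using bij_betw_apply[OF g, of i] that B(1) by auto
  obtain q h where q: "bij_betw q {0..<card T} T"
    and split: "char_poly ?M = char_poly (principal_submat (card T) q ?M) *
      char_poly (principal_submat (k - card T) h ?M)"
  proof (rule char_poly_split_invariant_block[of ?M k T])
    fix i j assume "i \<in> T" "j < k" "j \<notin> T"
    then show "?M $$ (i, j) = 0"
      unfolding T_def using gn by (auto intro: laplacian_in_closed_zero[OF S(2)])
  qed (use T that in auto)
  have "principal_submat (card T) q ?M = principal_submat (card T) (g \<circ> q) (laplacian n A)"
  proof (rule principal_submat_principal_submat)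
    fix i assume "i < card T"
    then show "q i < k"
      using bij_betw_apply[OF q, of i] T by auto
  qed
  moreover have "bij_betw (g \<circ> q) {0..<card T} S"
  proof (rule bij_betw_trans[OF q bij_betw_subset[OF g T]])
    have "g ` T = g ` {0..<k} \<inter> S"
      unfolding T_def by blast
    then show "g ` T = S"
      using B(2) bij_betw_imp_surj_on[OF g] by auto
  qed
  ultimately have "poly (char_poly (principal_submat (card T) q ?M)) 0 = 0"
    using in_closed_block_singular[OF s _ S] B by auto
  then show ?thesis
    unfolding split by simp
qed

lemma not_rooted_lap_eigenvalue_0:
  assumes s: "simple_digraph n A" and n: "n > 0" and not_rooted: "\<not> rooted n A"
  shows "count (lap_eigenvalues n A) 0 \<ge> 2"
proof -
  let ?L = "laplacian n A"
  obtain S1 S2 where S: "S1 \<subseteq> {0..<n}" "S2 \<subseteq> {0..<n}" "S1 \<noteq> {}" "S2 \<noteq> {}" "S1 \<inter> S2 = {}"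
    and closed: "in_closed A S1" "in_closed A S2"
    using not_rooted_two_in_closed[OF s n not_rooted] by blast
  obtain f g where f: "bij_betw f {0..<card S1} S1"
    and g: "bij_betw g {0..<n - card S1} ({0..<n} - S1)"
    and split: "char_poly ?L = char_poly (principal_submat (card S1) f ?L) *
      char_poly (principal_submat (n - card S1) g ?L)"
  proof (rule char_poly_split_invariant_block[OF laplacian_carrier S(1)])
    fix i j assume "i \<in> S1" "j < n" "j \<notin> S1"
    then show "?L $$ (i, j) = 0"
      using S(1) by (intro laplacian_in_closed_zero[OF closed(1)]) auto
  qed (use that in auto)
  have "poly (char_poly (principal_submat (card S1) f ?L)) 0 = 0"
    using in_closed_principal_submat_singular[OF s S(3) closed(1) f S(1)] by simp
  moreover have "poly (char_poly (principal_submat (n - card S1) g ?L)) 0 = 0"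
    using in_closed_principal_submat_singular[OF s S(4) closed(2) g] S(2,5) by auto
  ultimately have "[:- 0, 1:] ^ 2 dvd char_poly ?L"
    unfolding split poly_eq_0_iff_dvd power2_eq_square by (rule mult_dvd_mono)
  moreover have "char_poly ?L \<noteq> 0"
    using degree_monic_char_poly[OF laplacian_carrier, of n A] by auto
  ultimately show ?thesis
    using order_divides[of 0 2 "char_poly ?L"] by (simp add: lap_eigenvalues_def)
qed

lemma alg_conn_not_rooted:
  assumes s: "simple_digraph n A" and n: "n > 0" and not_rooted: "\<not> rooted n A"
  shows "alg_conn n A = 0"
proof -
  let ?E = "lap_eigenvalues n A"
  have "count (image_mset Re ?E) 0 \<ge> 2"
    using not_rooted_lap_eigenvalue_0[OF s n not_rooted] count_le_count_image_mset[of ?E 0 Re]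
    by simp
  then show ?thesis
    using second_smallest_eq_0 lap_eigenvalue_Re_nonneg[OF s] by (simp add: alg_conn_def)
qed

theorem theorem1:
  fixes n :: nat
  assumes "n \<ge> 2"
  shows "(\<forall>A. simple_digraph n A \<and> card A = n - 1 \<longrightarrow> alg_conn n A \<le> 1)
    \<and> (\<exists>A. simple_digraph n A \<and> card A = n - 1 \<and> alg_conn n A = 1)
    \<and> (\<forall>A. simple_digraph n A \<and> card A = n - 1 \<longrightarrow> (alg_conn n A = 1 \<longleftrightarrow> directed_tree n A))"
proof (intro conjI allI impI)
  fix A assume "simple_digraph n A \<and> card A = n - 1"
  then show "alg_conn n A \<le> 1"
    using alg_conn_le_1 assms by blast
next
  have "directed_tree n (path_digraph n)"
    using assms by (intro directed_tree_path_digraph) simp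
  then show "\<exists>A. simple_digraph n A \<and> card A = n - 1 \<and> alg_conn n A = 1"
    using alg_conn_directed_tree[OF assms] unfolding directed_tree_def by blast
next
  fix A assume A: "simple_digraph n A \<and> card A = n - 1"
  show "alg_conn n A = 1 \<longleftrightarrow> directed_tree n A"
  proof
    assume "alg_conn n A = 1"
    then have "rooted n A"
      using alg_conn_not_rooted A assms by fastforce
    with A show "directed_tree n A"
      by (simp add: directed_tree_def)
  qed (rule alg_conn_directed_tree[OF assms])
qed

end
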